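(* Assume conditions (A1)–(A7) below hold. For $\varepsilon\in\mathbb{R}$ and $a\in\mathbb{R}^d$ let $Z^{\varepsilon,a}(h)=G(h)-\tfrac12h^TVh+\varepsilon a^Th$. Then there exist positive constants $C_6,C_7,C_8,K_0$ such that $$\sup_{\|a\|_2=1,\,|\varepsilon|\le1}\Pr\Big(\sup_{h\in\mathbb{R}^d}Z^{\varepsilon,a}(h)>x\Big)\le C_6\exp(-C_7x^2)+C_8\exp(-x)\qquad\text{for all }x\ge K_0.$$ As a result, for every integer $m>0$, $\sup_{\|a\|_2=1}\sup_{|\varepsilon|\le1}\mathbb{E}\big[\{\sup_hZ^{\varepsilon,a}(h)\}^m\big]<\infty$.
   Context: Setting: $X$ is a random element of a measurable space; $\Theta\subset\mathbb{R}^d$ ($d$ fixed) compact; $m(\cdot,\theta)$ real measurable for each $\theta\in\Theta$; $\theta_0\in\Theta$ the unique maximizer of $\theta\mapsto\mathbb{E}m(X,\theta)$; $m_h=m(\cdot,\theta_0+n^{-1/3}h)-m(\cdot,\theta_0)$. $\|\cdot\|_2$ is the Euclidean norm (operator norm for matrices); $\|Y\|_{\psi_1}=\inf\{C>0:\mathbb{E}\exp(|Y|/C)\le2\}$. Conditions: (A1) There is $\delta>0$ such that on $N_\delta=\{\theta:\|\theta-\theta_0\|_2\le\delta\}$ the map $\theta\mapsto\mathbb{E}m(X,\theta)$ is twice continuously differentiable with Hessian $-V(\theta)$, $V(\theta)$ positive definite on $N_\delta$, and $\mathbb{E}m(X,\theta_0)>\sup_{\theta\in N_\delta^c}\mathbb{E}m(X,\theta)$.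 (A2) For $\theta_1,\theta_2\in N_\delta$, $\mathbb{E}|m(X,\theta_1)-m(X,\theta_2)|^2=O(\|\theta_1-\theta_2\|_2)$. (A3) There is an envelope $M\ge|m(\cdot,\theta)|$ for all $\theta$ with $\omega=\|M(X)\|_{\psi_1}<\infty$. (A4) $M_R(\cdot)=\sup\{|m(\cdot,\theta)-m(\cdot,\theta_0)|:\|\theta-\theta_0\|_2\le R\}$ satisfies $\mathbb{E}M_R(X)^2=O(R)$ for $R\le\delta$. (A5) $\{m(\cdot,\theta):\theta\in\Theta\}$ has VC index $v$ with $1\le v<\infty$. (A6) $\|V(\theta)-V\|_2=O(\|\theta-\theta_0\|_2)$ for $\theta\in N_\delta$, where $V=V(\theta_0)$. (A7) $G$ is the mean-zero Gaussian process on $\mathbb{R}^d$ with covariance $\lim_nn^{1/3}\mathbb{E}[m_{h_1}(X)m_{h_2}(X)]$ (the process in the cube-root limit $n^{1/3}(\hat\theta-\theta_0)\xrightarrow{d}\arg\max_h\{G(h)-\frac12h^TVh\}$), and $L(h)=\mathbb{E}G(h)^2$ satisfies $L(h)>0$ for $h\neq0$. (i) $L$ is symmetric ($L(-h)=L(h)$), continuous, and $L(kh)=kL(h)$ for $k>0$. (ii) For $\|h_1\|_2,\|h_2\|_2\le n^{1/3}\delta$, $\big|L(h_1-h_2)-n^{1/3}\mathbb{E}\{m(X,\theta_0+n^{-1/3}h_1)-m(X,\theta_0+n^{-1/3}h_2)\}^2\big|=O\big((\|h_1\|_2+\|h_2\|_2)^2/n^{1/3}\big)$. *)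

theory Defs
  imports "HOL-Probability.Probability"
begin

text \<open>Orlicz psi_1 norm of a real random variable Y on a probability space M:
  inf of C > 0 with E exp(abs Y / C) \<le> 2 (infimum of the empty set is \<infinity>).\<close>
definition psi1_norm :: "'w measure \<Rightarrow> ('w \<Rightarrow> real) \<Rightarrow> ereal" where
  "psi1_norm M Y = Inf {ereal C | C. C > 0 \<and>
      (\<integral>\<^sup>+ w. ennreal (exp (\<bar>Y w\<bar> / C)) \<partial>M) \<le> 2}"

definition shatters :: "'a set set \<Rightarrow> 'a set \<Rightarrow> bool" where
  "shatters C S \<longleftrightarrow> (\<forall>T\<subseteq>S. \<exists>A\<in>C. A \<inter> S = T)"

definition has_vc_index :: "'a set set \<Rightarrow> nat \<Rightarrow> bool" where
  "has_vc_index C v \<longleftrightarrow>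
     (\<forall>S. finite S \<and> card S = v \<longrightarrow> \<not> shatters C S) \<and>
     (\<forall>n<v. \<exists>S. finite S \<and> card S = n \<and> shatters C S)"

definition subgraph :: "'b set \<Rightarrow> ('b \<Rightarrow> real) \<Rightarrow> ('b \<times> real) set" where
  "subgraph D f = {(x, t). x \<in> D \<and> t < f x}"

definition fun_class_vc_index :: "'b set \<Rightarrow> ('b \<Rightarrow> real) set \<Rightarrow> nat \<Rightarrow> bool" where
  "fun_class_vc_index D F v \<longleftrightarrow> has_vc_index (subgraph D ` F) v"

definition centered_gaussian :: "'w measure \<Rightarrow> ('w \<Rightarrow> real) \<Rightarrow> real \<Rightarrow> bool" where
  "centered_gaussian P Y s \<longleftrightarrow> Y \<in> borel_measurable P \<and>
     (if s = 0 then (AE w in P. Y w = 0)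
      else s > 0 \<and> distributed P lborel Y (\<lambda>x. ennreal (normal_density 0 (sqrt s) x)))"

definition gaussian_process :: "'w measure \<Rightarrow> ('i \<Rightarrow> 'w \<Rightarrow> real) \<Rightarrow> ('i \<Rightarrow> 'i \<Rightarrow> real) \<Rightarrow> bool" where
  "gaussian_process P G K \<longleftrightarrow> (\<forall>h. G h \<in> borel_measurable P) \<and>
     (\<forall>(hs :: 'i list) (cs :: real list). length hs = length cs \<longrightarrow>
        centered_gaussian P (\<lambda>w. \<Sum>i<length hs. cs ! i * G (hs ! i) w)
          (\<Sum>i<length hs. \<Sum>j<length hs. cs ! i * cs ! j * K (hs ! i) (hs ! j)))"

end

theory Submission
  imports Defs
begin

(* The increments G p - G q are centered Gaussian with variance L (p - q) \<le> c * norm (p - q):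
   the covariance K is recovered from L by polarization of the defining limits, and L, being
   continuous and positively homogeneous, grows at most linearly.  Chaining over the dyadic grids
   of the cubes [-R, R]^d then gives a Gaussian tail exp (-T^2 / (beta * R)) for the supremum of G
   over a cube.  As V is positive definite, Z h \<le> G h - lam/4 * norm h ^ 2 + 1/lam uniformly in
   norm a = 1 and \<bar>\<epsilon>\<bar> \<le> 1; peeling over the shells j \<le> norm h < j + 1, where the drift
   raises the threshold by lam/4 * j^2, sums these tails to an exponential tail C * exp (-x),
   which in turn bounds every moment. *)

section \<open>Gaussian tails\<close>

lemma normal_density_le_wider:
  assumes s: "0 < s" and tx: "t^2 \<le> x^2"
  shows "normal_density 0 (sqrt s) x \<le> sqrt 2 * exp (-(t^2)/(4 * s)) * normal_density 0 (sqrt (2 * s)) x"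
proof -
  have split: "exp (-(x^2)/(2 * s)) = exp (-(x^2)/(4 * s)) * exp (-(x^2)/(4 * s))"
    by (simp add: exp_add[symmetric] field_simps)
  have "exp (-(x^2)/(4 * s)) \<le> exp (-(t^2)/(4 * s))" using tx s by (simp add: divide_right_mono)
  hence "exp (-(x^2)/(2 * s)) \<le> exp (-(t^2)/(4 * s)) * exp (-(x^2)/(4 * s))"
    unfolding split by (intro mult_right_mono) auto
  moreover have "sqrt (2 * pi * (2 * s)) = sqrt 2 * sqrt (2 * pi * s)"
    by (simp add: real_sqrt_mult[symmetric] mult.commute mult.left_commute)
  moreover have "\<And>z. sqrt 2 * (sqrt 2 * z) = 2 * z" by (simp add: mult.assoc[symmetric])
  ultimately show ?thesis using s
    by (simp add: normal_density_def field_simps real_sqrt_mult) (simp add: mult.assoc[symmetric])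
qed

lemma centered_gaussian_tail:
  assumes P: "prob_space P" and Y: "centered_gaussian P Y s" and sw: "s \<le> w" and w: "0 < w"
    and t: "0 \<le> t"
  shows "measure P {\<omega>\<in>space P. t < \<bar>Y \<omega>\<bar>} \<le> sqrt 2 * exp (-(t^2)/(4 * w))"
proof -
  interpret prob_space P by fact
  have "Y \<in> borel_measurable P" using Y by (simp add: centered_gaussian_def)
  hence tail_event: "{\<omega>\<in>space P. t < \<bar>Y \<omega>\<bar>} \<in> events" by measurable
  show ?thesis
  proof (cases "s = 0")
    case True
    hence "AE \<omega> in P. \<omega> \<notin> {\<omega>\<in>space P. t < \<bar>Y \<omega>\<bar>}"
      using Y t by (auto simp: centered_gaussian_def elim!: eventually_mono)
    hence "measure P {\<omega>\<in>space P. t < \<bar>Y \<omega>\<bar>} = 0"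
      using tail_event by (simp add: AE_iff_measurable measure_def)
    thus ?thesis by simp
  next
    case False
    hence s: "0 < s" and distr: "distributed P lborel Y (\<lambda>x. ennreal (normal_density 0 (sqrt s) x))"
      using Y by (auto simp: centered_gaussian_def)
    let ?A = "{x::real. t < \<bar>x\<bar>}"
    have "emeasure P {\<omega>\<in>space P. t < \<bar>Y \<omega>\<bar>}
        = (\<integral>\<^sup>+x. ennreal (normal_density 0 (sqrt s) x) * indicator ?A x \<partial>lborel)"
      using distributed_emeasure[OF distr, of ?A] by (simp add: Int_def conj_commute)
    also have "\<dots> \<le> (\<integral>\<^sup>+x. ennreal (sqrt 2 * exp (-(t^2)/(4 * s)))
                          * ennreal (normal_density 0 (sqrt (2 * s)) x) \<partial>lborel)"
    proof (intro nn_integral_mono)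
      fix x :: real
      show "ennreal (normal_density 0 (sqrt s) x) * indicator ?A x
          \<le> ennreal (sqrt 2 * exp (-(t^2)/(4 * s))) * ennreal (normal_density 0 (sqrt (2 * s)) x)"
      proof (cases "t < \<bar>x\<bar>")
        case True
        hence "t^2 \<le> x^2" using t by (metis abs_le_square_iff less_imp_le abs_of_nonneg)
        from normal_density_le_wider[OF s this] show ?thesis using True
          by (simp add: ennreal_mult'[symmetric] ennreal_leI)
      qed simp
    qed
    also have "\<dots> = ennreal (sqrt 2 * exp (-(t^2)/(4 * s)))"
      using s by (simp add: nn_integral_cmult nn_integral_eq_integral)
    finally have "measure P {\<omega>\<in>space P. t < \<bar>Y \<omega>\<bar>} \<le> sqrt 2 * exp (-(t^2)/(4 * s))"
      by (simp add: emeasure_eq_measure)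
    also have "\<dots> \<le> sqrt 2 * exp (-(t^2)/(4 * w))"
      using s sw t by (intro mult_left_mono) (auto intro!: divide_left_mono mult_pos_pos simp: power2_eq_square)
    finally show ?thesis .
  qed
qed

lemma gaussian_process_value:
  assumes "gaussian_process P G K"
  shows "centered_gaussian P (G p) (K p p)"
  using assms unfolding gaussian_process_def
  by (auto dest!: spec[of _ "[p]"] spec[of _ "[1]"])

lemma gaussian_process_increment:
  assumes "gaussian_process P G K"
  shows "centered_gaussian P (\<lambda>\<omega>. G p \<omega> - G q \<omega>) (K p p - K p q - K q p + K q q)"
  using assms unfolding gaussian_process_def
  by (auto dest!: spec[of _ "[p, q]"] spec[of _ "[1, -1]"]
      simp: numeral_2_eq_2 lessThan_Suc algebra_simps)

section \<open>Covariance and variogram\<close>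

lemma eventually_integrable_square:
  fixes a :: "nat \<Rightarrow> 'w \<Rightarrow> real"
  assumes lim: "(\<lambda>n. c n * (\<integral>\<omega>. (a n \<omega>)^2 \<partial>M)) \<longlonglongrightarrow> l"
    and nondegenerate: "l > 0 \<or> (\<forall>n \<omega>. a n \<omega> = 0)"
  shows "eventually (\<lambda>n. integrable M (\<lambda>\<omega>. (a n \<omega>)^2)) sequentially"
proof (cases "l > 0")
  case True
  \<comment> \<open>a non-integrable function has Bochner integral 0\<close>
  from order_tendstoD(1)[OF lim True] show ?thesis
    by (rule eventually_mono) (use not_integrable_integral_eq in fastforce)
qed (use nondegenerate in simp)

lemma limit_product_polarization:
  fixes a b :: "nat \<Rightarrow> 'w \<Rightarrow> real"
  assumes lim_ab: "(\<lambda>n. c n * (\<integral>\<omega>. a n \<omega> * b n \<omega> \<partial>M)) \<longlonglongrightarrow> l_ab"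
    and lim_a: "(\<lambda>n. c n * (\<integral>\<omega>. (a n \<omega>)^2 \<partial>M)) \<longlonglongrightarrow> l_a"
    and lim_b: "(\<lambda>n. c n * (\<integral>\<omega>. (b n \<omega>)^2 \<partial>M)) \<longlonglongrightarrow> l_b"
    and lim_d: "(\<lambda>n. c n * (\<integral>\<omega>. (a n \<omega> - b n \<omega>)^2 \<partial>M)) \<longlonglongrightarrow> l_d"
    and nondeg_a: "l_a > 0 \<or> (\<forall>n \<omega>. a n \<omega> = 0)"
    and nondeg_b: "l_b > 0 \<or> (\<forall>n \<omega>. b n \<omega> = 0)"
    and nondeg_d: "l_d > 0 \<or> (\<forall>n \<omega>. a n \<omega> - b n \<omega> = 0)"
  shows "l_ab = (l_a + l_b - l_d) / 2"
proof -
  have "eventually (\<lambda>n. (c n * (\<integral>\<omega>. (a n \<omega>)^2 \<partial>M) + c n * (\<integral>\<omega>. (b n \<omega>)^2 \<partial>M)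
      - c n * (\<integral>\<omega>. (a n \<omega> - b n \<omega>)^2 \<partial>M)) / 2 = c n * (\<integral>\<omega>. a n \<omega> * b n \<omega> \<partial>M)) sequentially"
    using eventually_integrable_square[OF lim_a nondeg_a] eventually_integrable_square[OF lim_b nondeg_b]
      eventually_integrable_square[where a="\<lambda>n \<omega>. a n \<omega> - b n \<omega>", OF lim_d nondeg_d]
  proof eventually_elim
    case (elim n)
    have "(\<lambda>\<omega>. a n \<omega> * b n \<omega>) = (\<lambda>\<omega>. ((a n \<omega>)^2 + (b n \<omega>)^2 - (a n \<omega> - b n \<omega>)^2) / 2)"
      by (auto simp: power2_eq_square algebra_simps)
    hence product: "(\<integral>\<omega>. a n \<omega> * b n \<omega> \<partial>M) = ((\<integral>\<omega>. (a n \<omega>)^2 \<partial>M) + (\<integral>\<omega>. (b n \<omega>)^2 \<partial>M)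
       - (\<integral>\<omega>. (a n \<omega> - b n \<omega>)^2 \<partial>M)) / 2"
      using elim by simp
    show ?case unfolding product by (simp add: field_simps)
  qed
  moreover have "(\<lambda>n. (c n * (\<integral>\<omega>. (a n \<omega>)^2 \<partial>M) + c n * (\<integral>\<omega>. (b n \<omega>)^2 \<partial>M)
      - c n * (\<integral>\<omega>. (a n \<omega> - b n \<omega>)^2 \<partial>M)) / 2) \<longlonglongrightarrow> (l_a + l_b - l_d) / 2"
    by (intro tendsto_intros lim_a lim_b lim_d) simp
  ultimately have "(\<lambda>n. c n * (\<integral>\<omega>. a n \<omega> * b n \<omega> \<partial>M)) \<longlonglongrightarrow> (l_a + l_b - l_d) / 2"
    by (rule Lim_transform_eventually[rotated])
  thus ?thesis using lim_ab LIMSEQ_unique by blast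
qed

lemma covariance_polarization:
  fixes Y :: "nat \<Rightarrow> 'i::ab_group_add \<Rightarrow> 'w \<Rightarrow> real" and K :: "'i \<Rightarrow> 'i \<Rightarrow> real"
  assumes cross: "\<And>p q. (\<lambda>n. c n * (\<integral>\<omega>. Y n p \<omega> * Y n q \<omega> \<partial>M)) \<longlonglongrightarrow> K p q"
    and increment: "\<And>p q. (\<lambda>n. c n * (\<integral>\<omega>. (Y n p \<omega> - Y n q \<omega>)^2 \<partial>M)) \<longlonglongrightarrow> K (p - q) (p - q)"
    and nondegenerate: "\<And>p. p \<noteq> 0 \<Longrightarrow> K p p > 0" and Y0: "\<And>n \<omega>. Y n 0 \<omega> = 0"
  shows "K p q = (K p p + K q q - K (p - q) (p - q)) / 2"
proof -
  have square: "(\<lambda>n. c n * (\<integral>\<omega>. (Y n p \<omega>)^2 \<partial>M)) \<longlonglongrightarrow> K p p" for p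
    using cross[of p p] by (simp add: power2_eq_square)
  have nondegenerate_or_zero: "K r r > 0 \<or> (\<forall>n \<omega>. Y n r \<omega> = 0)" for r
    using nondegenerate Y0 by (cases "r = 0") auto
  show ?thesis
  proof (rule limit_product_polarization[OF cross square square increment
        nondegenerate_or_zero nondegenerate_or_zero])
    show "K (p - q) (p - q) > 0 \<or> (\<forall>n \<omega>. Y n p \<omega> - Y n q \<omega> = 0)"
      using nondegenerate[of "p - q"] by (cases "p = q") auto
  qed
qed

lemma cube_root_at_top: "filterlim (\<lambda>n. real n powr (1/3)) at_top sequentially"
proof -
  have "(\<lambda>n. real n powr (- (1/3))) \<longlonglongrightarrow> 0"
    by (rule tendsto_neg_powr) (auto simp: filterlim_real_sequentially)
  moreover have "eventually (\<lambda>n. 0 < real n powr (- (1/3))) sequentially"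
    using eventually_gt_at_top[of 0] by (auto elim!: eventually_mono)
  ultimately have "filterlim (\<lambda>n. inverse (real n powr (- (1/3)))) at_top sequentially"
    by (rule filterlim_inverse_at_top)
  thus ?thesis by (simp add: powr_minus)
qed

lemma tendsto_of_cube_root_approx:
  fixes a :: "nat \<Rightarrow> real" and l :: real and h1 h2 :: "'a::real_normed_vector"
  assumes \<delta>: "0 < \<delta>" and approx: "\<And>n. n \<ge> 1 \<Longrightarrow> norm h1 \<le> real n powr (1/3) * \<delta> \<Longrightarrow>
      norm h2 \<le> real n powr (1/3) * \<delta> \<Longrightarrow> \<bar>l - a n\<bar> \<le> C * (norm h1 + norm h2)^2 / real n powr (1/3)"
  shows "a \<longlonglongrightarrow> l"
proof -
  have "eventually (\<lambda>n. norm (a n - l) \<le> C * (norm h1 + norm h2)^2 / real n powr (1/3)) sequentially"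
    using cube_root_at_top[unfolded filterlim_at_top, rule_format, of "norm h1 / \<delta>"]
      cube_root_at_top[unfolded filterlim_at_top, rule_format, of "norm h2 / \<delta>"]
      eventually_ge_at_top[of 1]
  proof eventually_elim
    case (elim n)
    thus ?case using approx[of n] \<delta> by (simp add: field_simps abs_minus_commute)
  qed
  moreover have "(\<lambda>n. C * (norm h1 + norm h2)^2 / real n powr (1/3)) \<longlonglongrightarrow> 0"
    by (intro tendsto_divide_0[OF tendsto_const] filterlim_at_top_imp_at_infinity cube_root_at_top)
  ultimately have "(\<lambda>n. a n - l) \<longlonglongrightarrow> 0" by (rule Lim_null_comparison)
  thus ?thesis by (simp add: LIM_zero_iff)
qed

lemma positively_homogeneous_le_linear:
  fixes L :: "'a::euclidean_space \<Rightarrow> real"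
  assumes cont: "continuous_on UNIV L" and hom: "\<forall>k h. k > 0 \<longrightarrow> L (k *\<^sub>R h) = k * L h"
  obtains c where "0 < c" "\<And>h. L h \<le> c * norm h"
proof -
  have L0: "L 0 = 0" using hom[rule_format, of 2 0] by simp
  have "compact (L ` sphere 0 1)"
    using cont by (intro compact_continuous_image) (auto intro: continuous_on_subset)
  then obtain B where B: "\<And>u. u \<in> sphere 0 1 \<Longrightarrow> \<bar>L u\<bar> \<le> B"
    using compact_imp_bounded bounded_real by (metis image_eqI)
  have bound: "L h \<le> max 1 B * norm h" for h
  proof (cases "h = 0")
    case False
    hence "L h = L (norm h *\<^sub>R (inverse (norm h) *\<^sub>R h))" by simp
    also have "\<dots> = norm h * L (inverse (norm h) *\<^sub>R h)" using hom False by simp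
    also have "\<dots> \<le> norm h * max 1 B"
      using B[of "inverse (norm h) *\<^sub>R h"] False by (intro mult_left_mono) (auto simp: norm_inverse)
    finally show ?thesis by (simp add: mult.commute)
  qed (simp add: L0)
  show ?thesis by (rule that[of "max 1 B", OF _ bound]) simp
qed

section \<open>Moments from exponential tails\<close>

lemma summable_poly_exp_neg: "summable (\<lambda>n::nat. (real n + 1)^k * exp (- real n))"
proof (rule summable_comparison_test')
  let ?C = "(2 * real k + 2)^k * exp (1/2)"
  show "summable (\<lambda>n. ?C * exp (-1/2) ^ n)" by (intro summable_mult summable_geometric) simp
  fix n :: nat
  define t where "t = (real n + 1) / (2 * real k + 2)"
  have t: "0 \<le> t" "real k * t \<le> (real n + 1) / 2" by (auto simp: t_def field_simps)
  have "t \<le> exp t" using exp_ge_add_one_self[of t] by linarith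
  have "(real n + 1)^k = (2 * real k + 2)^k * t^k"
    by (simp add: t_def power_mult_distrib[symmetric])
  also have "\<dots> \<le> (2 * real k + 2)^k * exp t ^ k"
    using t \<open>t \<le> exp t\<close> by (intro mult_left_mono power_mono) auto
  also have "exp t ^ k = exp (real k * t)" by (simp add: exp_of_nat_mult)
  also have "\<dots> \<le> exp ((real n + 1) / 2)" using t by simp
  finally have "(real n + 1)^k * exp (- real n) \<le> (2 * real k + 2)^k * exp ((real n + 1) / 2) * exp (- real n)"
    by (intro mult_right_mono) auto
  also have "\<dots> = ?C * exp (-1/2) ^ n"
    by (simp add: exp_add[symmetric] exp_of_nat_mult[symmetric] field_simps)
  finally show "norm ((real n + 1)^k * exp (- real n)) \<le> ?C * exp (-1/2) ^ n" by simp
qed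

lemma e2ennreal_power_le_suminf_indicator:
  fixes z :: ereal
  assumes exceeds: "\<And>n::nat. ereal (real n) < z \<Longrightarrow> \<omega> \<in> S n" and k: "0 < k"
  shows "e2ennreal z ^ k \<le> (\<Sum>n. ennreal ((real n + 1)^k) * indicator (S n) \<omega>)"
proof (cases z)
  case (real r)
  show ?thesis
  proof (cases "r \<le> 0")
    case True thus ?thesis using real k by (simp add: ennreal_neg zero_power)
  next
    case False
    define n where "n = nat \<lceil>r\<rceil> - 1"
    have n: "real n < r" "r \<le> real n + 1" using False by (simp_all add: n_def) linarith+
    have "e2ennreal z ^ k = ennreal (r^k)" using real False by (simp add: ennreal_power)
    also have "\<dots> \<le> ennreal ((real n + 1)^k)" using n False by (intro ennreal_leI power_mono) auto
    also have "\<dots> = ennreal ((real n + 1)^k) * indicator (S n) \<omega>" using exceeds[of n] real n by simp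
    also have "\<dots> \<le> (\<Sum>n. ennreal ((real n + 1)^k) * indicator (S n) \<omega>)"
      by (rule order_trans[OF _ sum_le_suminf[OF summableI, of "{n}"]])
        (simp only: sum.insert[OF finite.emptyI] empty_iff not_False_eq_True sum.empty add_0_right
          order_refl, simp_all)
    finally show ?thesis .
  qed
next
  case PInf
  have "of_nat N \<le> (\<Sum>n. ennreal ((real n + 1)^k) * indicator (S n) \<omega>)" for N
  proof -
    have "of_nat N = (\<Sum>n<N. (1::ennreal))" by simp
    also have "\<dots> \<le> (\<Sum>n<N. ennreal ((real n + 1)^k) * indicator (S n) \<omega>)"
      using exceeds PInf by (intro sum_mono) simp
    also have "\<dots> \<le> (\<Sum>n. ennreal ((real n + 1)^k) * indicator (S n) \<omega>)"
      by (rule sum_le_suminf[OF summableI]) auto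
    finally show ?thesis .
  qed
  hence "(SUP N. of_nat N) \<le> (\<Sum>n. ennreal ((real n + 1)^k) * indicator (S n) \<omega>)"
    by (intro SUP_least)
  hence "(\<Sum>n. ennreal ((real n + 1)^k) * indicator (S n) \<omega>) = \<infinity>"
    by (simp add: ennreal_SUP_of_nat_eq_top top_unique)
  thus ?thesis by simp
next
  case MInf thus ?thesis using k by (simp add: e2ennreal_neg zero_power)
qed

lemma (in prob_space) nn_integral_power_le_exponential_tail:
  fixes F :: "'a \<Rightarrow> ereal" and U :: "real \<Rightarrow> 'a set"
  assumes U: "\<And>x. U x \<in> events" and tail: "\<And>x. xmin \<le> x \<Longrightarrow> prob (U x) \<le> A * exp (-x)"
    and exceeds: "\<And>x \<omega>. \<omega> \<in> space M \<Longrightarrow> ereal x < F \<omega> \<Longrightarrow> \<omega> \<in> U x" and k: "0 < k"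
  shows "(\<integral>\<^sup>+\<omega>. e2ennreal (F \<omega>) ^ k \<partial>M)
    \<le> ennreal (\<Sum>n. (real n + 1)^k * (max A (exp xmin) * exp (- real n)))"
proof -
  let ?B = "max A (exp xmin)"
  have B: "0 \<le> ?B" by (simp add: max.coboundedI2 less_imp_le)
  have tail_everywhere: "emeasure M (U x) \<le> ennreal (?B * exp (-x))" for x
  proof (cases "xmin \<le> x")
    case True
    with tail have "prob (U x) \<le> ?B * exp (-x)" by (smt (verit) exp_gt_zero mult_right_mono)
    thus ?thesis by (simp add: emeasure_eq_measure) (rule ennreal_leI)
  next
    case False
    hence "1 \<le> exp xmin * exp (-x)" by (simp add: exp_minus field_simps)
    also have "\<dots> \<le> ?B * exp (-x)" by (intro mult_right_mono) auto
    finally show ?thesis using emeasure_le_1[of "U x"] ennreal_leI order_trans by fastforce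
  qed
  have "(\<integral>\<^sup>+\<omega>. e2ennreal (F \<omega>) ^ k \<partial>M)
      \<le> (\<integral>\<^sup>+\<omega>. (\<Sum>n. ennreal ((real n + 1)^k) * indicator (U (real n)) \<omega>) \<partial>M)"
    using exceeds k by (intro nn_integral_mono e2ennreal_power_le_suminf_indicator) auto
  also have "\<dots> = (\<Sum>n. ennreal ((real n + 1)^k) * emeasure M (U (real n)))"
    using U by (simp add: nn_integral_suminf nn_integral_cmult_indicator)
  also have "\<dots> \<le> (\<Sum>n. ennreal ((real n + 1)^k) * ennreal (?B * exp (- real n)))"
    by (intro suminf_le mult_left_mono tail_everywhere) auto
  also have "\<dots> = (\<Sum>n. ennreal ((real n + 1)^k * (?B * exp (- real n))))"
    using B by (simp add: ennreal_mult)
  also have "\<dots> = ennreal (\<Sum>n. (real n + 1)^k * (?B * exp (- real n)))"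
    using summable_mult[OF summable_poly_exp_neg[of k], of ?B]
    by (intro suminf_ennreal2) (auto simp: algebra_simps intro!: mult_nonneg_nonneg B)
  finally show ?thesis .
qed

section \<open>Dyadic grids\<close>

definition dyadic_point :: "real \<Rightarrow> nat \<Rightarrow> ('d::finite \<Rightarrow> nat) \<Rightarrow> real^'d" where
  "dyadic_point R k j = (\<chi> i. R * (2 * real (j i) / 2^k - 1))"

definition dyadic_index :: "nat \<Rightarrow> ('d::finite \<Rightarrow> nat) set" where
  "dyadic_index k = {j. \<forall>i. j i \<le> 2^k}"

definition dyadic_parent :: "('d \<Rightarrow> nat) \<Rightarrow> 'd \<Rightarrow> nat" where
  "dyadic_parent j = (\<lambda>i. j i div 2)"

definition dyadic_grid :: "real \<Rightarrow> (real^'d::finite) set" where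
  "dyadic_grid R = (\<Union>k. dyadic_point R k ` dyadic_index k)"

lemma dyadic_index_PiE: "dyadic_index k = PiE UNIV (\<lambda>_. {..2^k})"
  by (auto simp: dyadic_index_def PiE_UNIV_domain)

lemma finite_dyadic_index: "finite (dyadic_index k)"
  unfolding dyadic_index_PiE by (intro finite_PiE) auto

lemma card_dyadic_index: "card (dyadic_index k :: ('d::finite \<Rightarrow> nat) set) = (2^k + 1)^CARD('d)"
  unfolding dyadic_index_PiE by (simp add: card_PiE)

lemma card_dyadic_index_Suc_le:
  "real (card (dyadic_index (Suc k) :: ('d::finite \<Rightarrow> nat) set)) \<le> 4^CARD('d) * (2^CARD('d))^k"
proof -
  have "real (card (dyadic_index (Suc k) :: ('d \<Rightarrow> nat) set)) = (2 * 2^k + 1)^CARD('d)"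
    by (simp add: card_dyadic_index add.commute)
  also have "\<dots> \<le> (4 * 2^k)^CARD('d)"
  proof (intro power_mono)
    show "2 * 2^k + 1 \<le> (4 * 2^k :: real)" using one_le_power[of "2::real" k] by linarith
  qed simp
  also have "\<dots> = 4^CARD('d) * (2^CARD('d))^k"
    by (simp add: power_mult_distrib power_mult[symmetric] mult.commute)
  finally show ?thesis .
qed

lemma dyadic_parent_in_index: "j \<in> dyadic_index (Suc k) \<Longrightarrow> dyadic_parent j \<in> dyadic_index k"
  by (auto simp: dyadic_index_def dyadic_parent_def) (metis div_le_mono nonzero_mult_div_cancel_left
      zero_neq_numeral)

lemma countable_dyadic_grid: "countable (dyadic_grid R)"
  unfolding dyadic_grid_def by (auto intro!: countable_finite finite_dyadic_index)

lemma norm_dyadic_point_parent_le: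
  fixes j :: "'d::finite \<Rightarrow> nat"
  assumes "0 \<le> R"
  shows "norm (dyadic_point R (Suc k) j - dyadic_point R k (dyadic_parent j) :: real^'d)
    \<le> real CARD('d) * R / 2^k"
proof -
  have "\<bar>(dyadic_point R (Suc k) j - dyadic_point R k (dyadic_parent j)) $ i\<bar> \<le> R / 2^k" for i :: 'd
  proof -
    have "real (j i) = 2 * real (j i div 2) + real (j i mod 2)"
      by (metis div_mult_mod_eq of_nat_add of_nat_mult of_nat_numeral mult.commute)
    hence "(dyadic_point R (Suc k) j - dyadic_point R k (dyadic_parent j)) $ i = R * real (j i mod 2) / 2^k"
      by (simp add: dyadic_point_def dyadic_parent_def field_simps)
    thus ?thesis using assms by (simp add: abs_mult divide_right_mono mult_left_le)
  qed
  hence "(\<Sum>i\<in>UNIV. \<bar>(dyadic_point R (Suc k) j - dyadic_point R k (dyadic_parent j)) $ i\<bar>)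
      \<le> (\<Sum>i\<in>(UNIV::'d set). R / 2^k)"
    by (intro sum_mono)
  from order_trans[OF norm_le_l1_cart this] show ?thesis by simp
qed

lemma norm_dyadic_point_0_le:
  assumes "0 \<le> R" "j \<in> dyadic_index 0"
  shows "norm (dyadic_point R 0 j :: real^'d) \<le> real CARD('d) * R"
proof -
  have "\<bar>(dyadic_point R 0 j :: real^'d) $ i\<bar> \<le> R" for i
  proof -
    have "j i \<le> 1" using assms by (simp add: dyadic_index_def)
    hence "j i = 0 \<or> j i = 1" by auto
    thus ?thesis using assms by (auto simp: dyadic_point_def)
  qed
  hence "(\<Sum>i\<in>UNIV. \<bar>(dyadic_point R 0 j :: real^'d) $ i\<bar>) \<le> (\<Sum>i\<in>(UNIV::'d set). R)"
    by (intro sum_mono)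
  from order_trans[OF norm_le_l1_cart this] show ?thesis by simp
qed

lemma dyadic_grid_dense:
  fixes h :: "real^'d::finite"
  assumes R: "0 < R" and h: "norm h < R" and e: "0 < e"
  obtains p where "p \<in> dyadic_grid R" "dist p h < e"
proof -
  obtain k :: nat where k: "real CARD('d) * (2 * R) / e < 2^k"
    using real_arch_pow[of 2 "real CARD('d) * (2 * R) / e"] by auto
  define j where "j i = nat \<lfloor>(h$i + R) / (2 * R) * 2^k\<rfloor>" for i
  have hi: "\<bar>h$i\<bar> < R" for i using component_le_norm_cart[of h i] h by linarith
  have "j \<in> dyadic_index k"
  proof -
    have "(h$i + R) / (2 * R) * 2^k \<le> 2^k" for i using hi[of i] R by (simp add: field_simps)
    hence "\<lfloor>(h$i + R) / (2 * R) * 2^k\<rfloor> \<le> 2^k" for i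
      by (metis floor_mono floor_of_nat of_nat_numeral of_nat_power)
    thus ?thesis by (simp add: dyadic_index_def j_def nat_le_iff)
  qed
  hence grid: "dyadic_point R k j \<in> dyadic_grid R" by (auto simp: dyadic_grid_def)
  have "\<bar>(dyadic_point R k j - h) $ i\<bar> \<le> 2 * R / 2^k" for i
  proof -
    let ?z = "(h$i + R) / (2 * R) * 2^k"
    have "0 \<le> ?z" using hi[of i] R by (intro mult_nonneg_nonneg divide_nonneg_pos) auto
    hence "real (j i) \<le> ?z" "?z < real (j i) + 1" by (simp_all add: j_def)
    hence "2 * R * real (j i) / 2^k \<le> h$i + R" "h$i + R < 2 * R * real (j i) / 2^k + 2 * R / 2^k"
      using R by (simp_all add: field_simps)
    moreover have "(dyadic_point R k j - h) $ i = 2 * R * real (j i) / 2^k - (h$i + R)"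
      by (simp add: dyadic_point_def field_simps)
    ultimately show ?thesis unfolding abs_le_iff by linarith
  qed
  hence "(\<Sum>i\<in>UNIV. \<bar>(dyadic_point R k j - h) $ i\<bar>) \<le> (\<Sum>i\<in>(UNIV::'d set). 2 * R / 2^k)"
    by (intro sum_mono)
  also have "\<dots> = real CARD('d) * (2 * R) / 2^k" by simp
  also have "\<dots> < e" using k e by (simp add: field_simps)
  finally have "dist (dyadic_point R k j) h < e"
    unfolding dist_norm using le_less_trans[OF norm_le_l1_cart] by blast
  with grid that show ?thesis by blast
qed

lemma dyadic_chaining:
  fixes f :: "nat \<Rightarrow> ('d::finite \<Rightarrow> nat) \<Rightarrow> real"
  assumes base: "\<And>j. j \<in> dyadic_index 0 \<Longrightarrow> \<bar>f 0 j\<bar> \<le> a"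
    and step: "\<And>k j. j \<in> dyadic_index (Suc k) \<Longrightarrow> \<bar>f (Suc k) j - f k (dyadic_parent j)\<bar> \<le> t k"
    and "j \<in> dyadic_index k"
  shows "\<bar>f k j\<bar> \<le> a + (\<Sum>i<k. t i)"
  using \<open>j \<in> dyadic_index k\<close>
proof (induction k arbitrary: j)
  case (Suc k)
  have "\<bar>f k (dyadic_parent j)\<bar> \<le> a + (\<Sum>i<k. t i)"
    using Suc.prems by (intro Suc.IH dyadic_parent_in_index)
  with step[OF Suc.prems] show ?case by simp
qed (simp add: base)

section \<open>The quadratic drift\<close>

lemma posdef_quadratic_form_coercive:
  fixes V :: "real^'n^'n"
  assumes posdef: "\<And>u. u \<noteq> 0 \<Longrightarrow> 0 < u \<bullet> (V *v u)"
  obtains lam where "0 < lam" "\<And>h. lam * (norm h)^2 \<le> h \<bullet> (V *v h)"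
proof -
  have "continuous_on (sphere 0 1) (\<lambda>u::real^'n. u \<bullet> (V *v u))"
    by (intro continuous_on_inner continuous_on_id matrix_vector_mult_linear_continuous_on)
  from continuous_attains_inf[OF compact_sphere _ this]
  obtain u0 where u0: "u0 \<in> sphere (0::real^'n) 1"
    and min: "\<And>u. u \<in> sphere 0 1 \<Longrightarrow> u0 \<bullet> (V *v u0) \<le> u \<bullet> (V *v u)"
    by auto
  have "u0 \<bullet> (V *v u0) * (norm h)^2 \<le> h \<bullet> (V *v h)" for h
  proof (cases "h = 0")
    case False
    define u where "u = inverse (norm h) *\<^sub>R h"
    have hu: "h = norm h *\<^sub>R u" using False by (simp add: u_def)
    have "u0 \<bullet> (V *v u0) * (norm h)^2 \<le> (u \<bullet> (V *v u)) * (norm h)^2"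
      using False by (intro mult_right_mono min) (simp_all add: u_def norm_inverse)
    also have "\<dots> = h \<bullet> (V *v h)"
      by (subst (2 3) hu) (simp add: matrix_vector_mult_scaleR power2_eq_square)
    finally show ?thesis .
  qed simp
  moreover have "0 < u0 \<bullet> (V *v u0)" by (rule posdef) (use u0 in auto)
  ultimately show ?thesis using that by blast
qed

lemma linear_drift_le_quadratic:
  fixes a h :: "'a::real_inner"
  assumes lam: "0 < lam" and q: "lam * (norm h)^2 \<le> q" and a: "norm a = 1" and \<epsilon>: "\<bar>\<epsilon>\<bar> \<le> 1"
  shows "-(1/2) * q + \<epsilon> * (a \<bullet> h) \<le> -(lam/4) * (norm h)^2 + 1/lam"
proof -
  have "\<epsilon> * (a \<bullet> h) \<le> \<bar>\<epsilon>\<bar> * \<bar>a \<bullet> h\<bar>" by (simp add: abs_mult[symmetric])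
  also have "\<dots> \<le> 1 * (norm a * norm h)" using \<epsilon> Cauchy_Schwarz_ineq2[of a h] by (intro mult_mono) auto
  finally have "\<epsilon> * (a \<bullet> h) \<le> norm h" using a by simp
  \<comment> \<open>AM-GM: 4 lam |h| \<le> lam^2 |h|^2 + 4\<close>
  moreover have "0 \<le> (lam * norm h - 2)^2" by simp
  hence "norm h \<le> lam/4 * (norm h)^2 + 1/lam"
    using lam by (simp add: power2_eq_square field_simps)
  ultimately show ?thesis using q by simp
qed

text \<open>A countable stand-in for the event that h \<mapsto> G h \<omega> - \<mu> * norm h ^ 2 exceeds y: the
  j-th term takes care of the shell j \<le> norm h < j + 1.\<close>
definition drift_exceedance :: "'p measure \<Rightarrow> (real^'d::finite \<Rightarrow> 'p \<Rightarrow> real) \<Rightarrow> real \<Rightarrow> real \<Rightarrow> 'p set"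
  where "drift_exceedance P G \<mu> y =
    (\<Union>j::nat. {\<omega>\<in>space P. \<exists>p\<in>dyadic_grid (real j + 1). y + \<mu> * (real j)^2 < G p \<omega>})"

lemma drift_exceedanceI:
  fixes G :: "real^'d::finite \<Rightarrow> 'p \<Rightarrow> real"
  assumes \<omega>: "\<omega> \<in> space P" and cont: "continuous_on UNIV (\<lambda>h. G h \<omega>)" and \<mu>: "0 \<le> \<mu>"
    and exceeds: "y < G h \<omega> - \<mu> * (norm h)^2"
  shows "\<omega> \<in> drift_exceedance P G \<mu> y"
proof -
  define j where "j = nat \<lfloor>norm h\<rfloor>"
  have "real j \<le> norm h" and h: "norm h < real j + 1" by (simp_all add: j_def)
  hence "\<mu> * (real j)^2 \<le> \<mu> * (norm h)^2" using \<mu> by (intro mult_left_mono power_mono) auto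
  hence "h \<in> {p. y + \<mu> * (real j)^2 < G p \<omega>}" using exceeds by simp
  moreover have "open {p. y + \<mu> * (real j)^2 < G p \<omega>}"
    using cont by (intro open_Collect_less continuous_on_const)
  ultimately obtain e where "0 < e" and e: "\<And>p. dist p h < e \<Longrightarrow> y + \<mu> * (real j)^2 < G p \<omega>"
    unfolding open_dist by (metis (no_types, lifting) dist_commute mem_Collect_eq)
  obtain p where "p \<in> dyadic_grid (real j + 1)" "dist p h < e"
    using dyadic_grid_dense[of "real j + 1" h e] h \<open>0 < e\<close> by auto
  with e \<omega> show ?thesis by (auto simp: drift_exceedance_def)
qed

lemma shell_threshold_bounds:
  fixes \<mu> \<beta> K y :: real and j :: nat
  assumes \<mu>: "0 < \<mu>" and \<beta>: "0 < \<beta>" "\<beta> \<le> K" and y: "K + K^2 / (4 * \<mu>) \<le> y"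
  shows "K * (real j + 1) \<le> y + \<mu> * (real j)^2"
    and "-((y + \<mu> * (real j)^2)^2) / (\<beta> * (real j + 1)) \<le> -y - \<mu> * real j"
proof -
  let ?T = "y + \<mu> * (real j)^2"
  have "0 \<le> \<mu> * (real j - K / (2 * \<mu>))^2" using \<mu> by simp
  also have "\<mu> * (real j - K / (2 * \<mu>))^2 = \<mu> * (real j)^2 - K * real j + K^2 / (4 * \<mu>)"
    using \<mu> by (simp add: power2_eq_square field_simps)
  finally show T: "K * (real j + 1) \<le> ?T" using y by (simp add: algebra_simps)
  have "\<beta> * (real j + 1) \<le> ?T" using T \<beta> by (meson order_trans mult_right_mono of_nat_0_le_iff
        add_nonneg_nonneg zero_le_one)
  moreover have "0 < \<beta> * (real j + 1)" using \<beta> by simp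
  ultimately have "?T \<le> ?T^2 / (\<beta> * (real j + 1))"
    by (simp add: pos_le_divide_eq power2_eq_square mult_left_mono)
  moreover have "real j \<le> (real j)^2" by (cases j) (auto simp: power2_eq_square)
  hence "y + \<mu> * real j \<le> ?T" using \<mu> by simp
  ultimately show "-(?T^2) / (\<beta> * (real j + 1)) \<le> -y - \<mu> * real j" by simp
qed

section \<open>Chaining and peeling for Gaussian fields with linear variogram\<close>

lemma pow2_mult_exp_neg_sq_le_half:
  fixes s :: real
  assumes "sqrt (32 * (real D + 1) * ln 2) \<le> s"
  shows "2^D * exp (-(s^2)/32) \<le> 1/2"
proof -
  have "(sqrt (32 * (real D + 1) * ln 2))^2 \<le> s^2"
    using assms by (intro power_mono) auto
  hence "-(s^2)/32 \<le> real (D+1) * (- ln 2)" by (simp add: algebra_simps)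
  hence "exp (-(s^2)/32) \<le> exp (real (D+1) * (- ln 2))" by simp
  also have "\<dots> = (1/2)^(D+1)" by (simp only: exp_of_nat_mult) (simp add: exp_minus inverse_eq_divide)
  finally have "2^D * exp (-(s^2)/32) \<le> 2^D * (1/2)^(D+1)" by simp
  also have "\<dots> = 1/2" by (simp add: power_add power_one_over)
  finally show ?thesis .
qed

lemma exp_neg_sq_geometric_le:
  fixes s :: real
  shows "exp (-(s^2 * (9/8)^k)/4) \<le> exp (-(s^2)/4) * exp (-(s^2)/32) ^ k"
proof -
  have "1 + real k * (1/8) \<le> (1 + 1/8 :: real)^k" by (rule Bernoulli_inequality) simp
  hence "s^2 * (1 + real k / 8) \<le> s^2 * (9/8)^k" by (intro mult_left_mono) auto
  hence "exp (-(s^2 * (9/8)^k)/4) \<le> exp (-(s^2)/4 + real k * (-(s^2)/32))" by (simp add: field_simps)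
  also have "\<dots> = exp (-(s^2)/4) * exp (-(s^2)/32) ^ k" by (simp only: exp_add exp_of_nat_mult)
  finally show ?thesis .
qed

locale gaussian_field_linear_variogram = prob_space P for P :: "'p measure" +
  fixes G :: "real^'d::finite \<Rightarrow> 'p \<Rightarrow> real" and c :: real
  assumes variogram_pos: "0 < c"
    and value_gaussian: "\<And>p. \<exists>s \<le> c * norm p. centered_gaussian P (G p) s"
    and increment_gaussian: "\<And>p q. \<exists>s \<le> c * norm (p - q). centered_gaussian P (\<lambda>\<omega>. G p \<omega> - G q \<omega>) s"
begin

lemma measurable_field [measurable]: "G p \<in> borel_measurable P"
  using value_gaussian[of p] by (auto simp: centered_gaussian_def)

lemma value_tail:
  assumes "0 < r" "norm p \<le> r" "0 \<le> t"
  shows "prob {\<omega>\<in>space P. t < \<bar>G p \<omega>\<bar>} \<le> sqrt 2 * exp (-(t^2)/(4 * (c * r)))"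
proof -
  obtain s where s: "s \<le> c * norm p" and Gp: "centered_gaussian P (G p) s"
    using value_gaussian by blast
  have "s \<le> c * r" using s assms variogram_pos by (meson order_trans mult_left_mono less_imp_le)
  with centered_gaussian_tail[OF prob_space_axioms Gp] assms variogram_pos show ?thesis by simp
qed

lemma increment_tail:
  assumes "0 < r" "norm (p - q) \<le> r" "0 \<le> t"
  shows "prob {\<omega>\<in>space P. t < \<bar>G p \<omega> - G q \<omega>\<bar>} \<le> sqrt 2 * exp (-(t^2)/(4 * (c * r)))"
proof -
  obtain s where s: "s \<le> c * norm (p - q)" and Gpq: "centered_gaussian P (\<lambda>\<omega>. G p \<omega> - G q \<omega>) s"
    using increment_gaussian by blast
  have "s \<le> c * r" using s assms variogram_pos by (meson order_trans mult_left_mono less_imp_le)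
  with centered_gaussian_tail[OF prob_space_axioms Gpq] assms variogram_pos show ?thesis by simp
qed

text \<open>The chaining bound of grid_exceedance_subset holds outside these events.\<close>
definition base_exceedance :: "real \<Rightarrow> real \<Rightarrow> 'p set" where
  "base_exceedance R s = (\<Union>j\<in>dyadic_index 0.
     {\<omega>\<in>space P. s * sqrt (c * CARD('d) * R) < \<bar>G (dyadic_point R 0 j) \<omega>\<bar>})"

definition level_exceedance :: "real \<Rightarrow> real \<Rightarrow> nat \<Rightarrow> 'p set" where
  "level_exceedance R s k = (\<Union>j\<in>dyadic_index (Suc k). {\<omega>\<in>space P. s * sqrt (c * CARD('d) * R) * (3/4)^k
     < \<bar>G (dyadic_point R (Suc k) j) \<omega> - G (dyadic_point R k (dyadic_parent j)) \<omega>\<bar>})"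

lemma exceedance_events:
  "base_exceedance R s \<in> events" "level_exceedance R s k \<in> events"
  unfolding base_exceedance_def level_exceedance_def
  by (intro sets.finite_UN finite_dyadic_index ballI; measurable)+

lemma base_level_tail:
  assumes R: "0 < R" and s: "0 \<le> s"
  shows "prob (base_exceedance R s) \<le> 2^CARD('d) * (sqrt 2 * exp (-(s^2)/4))"
proof -
  have "prob (base_exceedance R s)
      \<le> (\<Sum>j\<in>dyadic_index 0. prob {\<omega>\<in>space P. s * sqrt (c * CARD('d) * R) < \<bar>G (dyadic_point R 0 j) \<omega>\<bar>})"
    unfolding base_exceedance_def
    by (intro finite_measure_subadditive_finite) (auto simp: finite_dyadic_index)
  also have "\<dots> \<le> (\<Sum>j\<in>(dyadic_index 0::('d \<Rightarrow> nat) set). sqrt 2 * exp (-(s^2)/4))"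
  proof (intro sum_mono)
    fix j :: "'d \<Rightarrow> nat" assume "j \<in> dyadic_index 0"
    hence "prob {\<omega>\<in>space P. s * sqrt (c * CARD('d) * R) < \<bar>G (dyadic_point R 0 j) \<omega>\<bar>}
        \<le> sqrt 2 * exp (-((s * sqrt (c * CARD('d) * R))^2)/(4 * (c * (CARD('d) * R))))"
      using norm_dyadic_point_0_le[of R j] R s variogram_pos
      by (intro value_tail) auto
    also have "-((s * sqrt (c * CARD('d) * R))^2) / (4 * (c * (CARD('d) * R))) = -(s^2) / 4"
      using R variogram_pos by (simp add: power_mult_distrib)
    finally show "prob {\<omega>\<in>space P. s * sqrt (c * CARD('d) * R) < \<bar>G (dyadic_point R 0 j) \<omega>\<bar>}
        \<le> sqrt 2 * exp (-(s^2)/4)" by simp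
  qed
  also have "\<dots> = 2^CARD('d) * (sqrt 2 * exp (-(s^2)/4))" by (simp add: card_dyadic_index)
  finally show ?thesis .
qed

text \<open>The thresholds (3/4)^k shrink more slowly than the standard deviations of the
  increments at level k, which are of order (1/2)^(k/2); the gain (9/8)^k in the exponent
  beats the (2^d)^k increments of level k.\<close>
lemma increment_level_tail:
  assumes R: "0 < R" and s: "sqrt (32 * (real CARD('d) + 1) * ln 2) \<le> s"
  shows "prob (level_exceedance R s k) \<le> 4^CARD('d) * (sqrt 2 * exp (-(s^2)/4)) * (1/2)^k"
proof -
  let ?D = "CARD('d)"
  let ?E = "\<lambda>j. {\<omega>\<in>space P. s * sqrt (c * CARD('d) * R) * (3/4)^k
            < \<bar>G (dyadic_point R (Suc k) j) \<omega> - G (dyadic_point R k (dyadic_parent j)) \<omega>\<bar>}"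
  have "0 \<le> sqrt (32 * (real CARD('d) + 1) * ln 2)" by simp
  hence s0: "0 \<le> s" using s by linarith
  have exponent: "-((s * sqrt (c * ?D * R) * (3/4)^k)^2) / (4 * (c * (?D * R / 2^k)))
      = -(s^2 * (9/8)^k) / 4"
  proof -
    have "((3/4::real)^k)^2 = (9/16)^k"
      by (simp add: power2_eq_square power_mult_distrib[symmetric])
    hence "(s * sqrt (c * ?D * R) * (3/4)^k)^2 = s^2 * (c * ?D * R) * (9/16)^k"
      using R variogram_pos by (simp add: power_mult_distrib)
    moreover have "(9/16::real)^k * 2^k = (9/8)^k" by (simp add: power_mult_distrib[symmetric])
    moreover have "\<And>x y::real. 0 < y \<Longrightarrow>
        -(s^2 * (c * ?D * R) * x) / (4 * (c * (?D * R / y))) = -(s^2 * (x * y)) / 4"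
      using R variogram_pos by (simp add: field_simps)
    ultimately show ?thesis by simp
  qed
  have "prob (level_exceedance R s k) \<le> (\<Sum>j\<in>dyadic_index (Suc k). prob (?E j))"
    unfolding level_exceedance_def by (intro finite_measure_subadditive_finite) (auto simp: finite_dyadic_index)
  also have "\<dots> \<le> (\<Sum>j\<in>(dyadic_index (Suc k)::('d \<Rightarrow> nat) set). sqrt 2 * exp (-(s^2 * (9/8)^k)/4))"
  proof (intro sum_mono)
    fix j :: "'d \<Rightarrow> nat"
    have "prob (?E j) \<le> sqrt 2 * exp (-((s * sqrt (c * CARD('d) * R) * (3/4)^k)^2)/(4 * (c * (?D * R / 2^k))))"
      using norm_dyadic_point_parent_le[of R k j] R s0 variogram_pos
      by (intro increment_tail) auto
    thus "prob (?E j) \<le> sqrt 2 * exp (-(s^2 * (9/8)^k)/4)" by (simp only: exponent)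
  qed
  also have "\<dots> = real (card (dyadic_index (Suc k) :: ('d \<Rightarrow> nat) set))
      * (sqrt 2 * exp (-(s^2 * (9/8)^k)/4))"
    by simp
  also have "\<dots> \<le> (4^?D * (2^?D)^k) * (sqrt 2 * (exp (-(s^2)/4) * exp (-(s^2)/32) ^ k))"
    by (intro mult_mono card_dyadic_index_Suc_le mult_left_mono exp_neg_sq_geometric_le) simp_all
  also have "\<dots> = 4^?D * (sqrt 2 * exp (-(s^2)/4)) * (2^?D * exp (-(s^2)/32))^k"
    by (simp add: power_mult_distrib)
  also have "\<dots> \<le> 4^?D * (sqrt 2 * exp (-(s^2)/4)) * (1/2)^k"
    using pow2_mult_exp_neg_sq_le_half[OF s] by (intro mult_left_mono power_mono) auto
  finally show ?thesis .
qed

lemma levels_tail: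
  assumes R: "0 < R" and s: "sqrt (32 * (real CARD('d) + 1) * ln 2) \<le> s"
  shows "prob (\<Union>k. level_exceedance R s k) \<le> 2 * 4^CARD('d) * (sqrt 2 * exp (-(s^2)/4))"
proof -
  define b where "b k = 4^CARD('d) * (sqrt 2 * exp (-(s^2)/4)) * (1/2::real)^k" for k
  have b: "summable b" "(\<Sum>k. b k) = 2 * 4^CARD('d) * (sqrt 2 * exp (-(s^2)/4))"
    unfolding b_def by (auto intro!: summable_mult summable_geometric simp: suminf_mult suminf_geometric)
  have level_le: "prob (level_exceedance R s k) \<le> b k" for k
    using increment_level_tail[OF R s] by (simp add: b_def)
  hence "summable (\<lambda>k. prob (level_exceedance R s k))"
    by (intro summable_comparison_test'[OF b(1)]) auto
  hence "prob (\<Union>k. level_exceedance R s k) \<le> (\<Sum>k. prob (level_exceedance R s k))"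
    by (intro finite_measure_subadditive_countably) (auto simp: exceedance_events)
  also have "\<dots> \<le> (\<Sum>k. b k)"
    using \<open>summable (\<lambda>k. prob (level_exceedance R s k))\<close> b(1) level_le by (intro suminf_le) auto
  finally show ?thesis using b(2) by simp
qed

lemma grid_exceedance_subset:
  assumes "0 < R" "0 \<le> s"
  shows "{\<omega>\<in>space P. \<exists>p\<in>dyadic_grid R. 5 * s * sqrt (c * CARD('d) * R) < G p \<omega>}
    \<subseteq> base_exceedance R s \<union> (\<Union>k. level_exceedance R s k)"
proof safe
  let ?w = "sqrt (c * CARD('d) * R)"
  fix \<omega> p assume \<omega>: "\<omega> \<in> space P" and "p \<in> dyadic_grid R"
    and exceeds: "5 * s * ?w < G p \<omega>" and levels: "\<omega> \<notin> (\<Union>k. level_exceedance R s k)"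
  then obtain k j where j: "j \<in> dyadic_index k" and p: "p = dyadic_point R k j"
    by (auto simp: dyadic_grid_def)
  show "\<omega> \<in> base_exceedance R s"
  proof (rule ccontr)
    assume "\<omega> \<notin> base_exceedance R s"
    hence "\<bar>G p \<omega>\<bar> \<le> s * ?w + (\<Sum>i<k. s * ?w * (3/4)^i)"
      unfolding p using \<omega> levels j
      by (intro dyadic_chaining[where f="\<lambda>k j. G (dyadic_point R k j) \<omega>"])
        (auto simp: base_exceedance_def level_exceedance_def not_less)
    also have "(\<Sum>i<k. s * ?w * (3/4)^i) = s * ?w * (4 * (1 - (3/4)^k))"
      by (simp add: sum_distrib_left[symmetric] sum_gp_strict)
    also have "\<dots> \<le> s * ?w * 4"
      using assms variogram_pos by (intro mult_left_mono mult_nonneg_nonneg) auto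
    finally show False using exceeds by linarith
  qed
qed

lemma grid_chaining_tail:
  assumes R: "0 < R" and s: "sqrt (32 * (real CARD('d) + 1) * ln 2) \<le> s"
  shows "prob {\<omega>\<in>space P. \<exists>p\<in>dyadic_grid R. 5 * s * sqrt (c * CARD('d) * R) < G p \<omega>}
    \<le> sqrt 2 * (2^CARD('d) + 2 * 4^CARD('d)) * exp (-(s^2)/4)"
proof -
  have "0 \<le> sqrt (32 * (real CARD('d) + 1) * ln 2)" by simp
  hence s0: "0 \<le> s" using s by linarith
  have levels_event: "(\<Union>k. level_exceedance R s k) \<in> events"
    by (intro sets.countable_UN') (auto simp: exceedance_events)
  have "prob {\<omega>\<in>space P. \<exists>p\<in>dyadic_grid R. 5 * s * sqrt (c * CARD('d) * R) < G p \<omega>}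
      \<le> prob (base_exceedance R s \<union> (\<Union>k. level_exceedance R s k))"
    using levels_event by (intro finite_measure_mono grid_exceedance_subset R s0) (auto simp: exceedance_events)
  also have "\<dots> \<le> prob (base_exceedance R s) + prob (\<Union>k. level_exceedance R s k)"
    using levels_event by (intro measure_Un_le) (auto simp: exceedance_events)
  also have "\<dots> \<le> 2^CARD('d) * (sqrt 2 * exp (-(s^2)/4)) + 2 * 4^CARD('d) * (sqrt 2 * exp (-(s^2)/4))"
    by (intro add_mono base_level_tail levels_tail R s0 s)
  also have "\<dots> = sqrt 2 * (2^CARD('d) + 2 * 4^CARD('d)) * exp (-(s^2)/4)"
    by (simp add: field_simps)
  finally show ?thesis .
qed

lemma grid_exceedance_tail:
  obtains A \<beta> K where "0 \<le> A" "0 < \<beta>" "0 < K"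
    "\<And>R T. 0 < R \<Longrightarrow> K * sqrt R \<le> T \<Longrightarrow>
       prob {\<omega>\<in>space P. \<exists>p\<in>dyadic_grid R. T < G p \<omega>} \<le> A * exp (-(T^2)/(\<beta> * R))"
proof -
  define s0 where "s0 = sqrt (32 * (real CARD('d) + 1) * ln 2)"
  define K where "K = 5 * s0 * sqrt (c * CARD('d)) + 1"
  have K: "0 < K" using variogram_pos by (simp add: K_def s0_def add_nonneg_pos)
  have tail: "prob {\<omega>\<in>space P. \<exists>p\<in>dyadic_grid R. T < G p \<omega>}
      \<le> sqrt 2 * (2^CARD('d) + 2 * 4^CARD('d)) * exp (-(T^2)/(100 * c * CARD('d) * R))"
    if R: "0 < R" and T: "K * sqrt R \<le> T" for R T
  proof -
    define w where "w = sqrt (c * CARD('d) * R)"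
    have w: "0 < w" "w^2 = c * CARD('d) * R" using variogram_pos R by (auto simp: w_def)
    define s where "s = T / (5 * w)"
    have "5 * s0 * w \<le> K * sqrt R"
      using R by (simp add: K_def w_def real_sqrt_mult algebra_simps)
    hence "s0 \<le> s" using T w by (simp add: s_def field_simps)
    from grid_chaining_tail[OF R this[unfolded s0_def]]
    have "prob {\<omega>\<in>space P. \<exists>p\<in>dyadic_grid R. T < G p \<omega>}
        \<le> sqrt 2 * (2^CARD('d) + 2 * 4^CARD('d)) * exp (-(s^2)/4)"
      using w by (simp add: s_def flip: w_def)
    also have "-(s^2)/4 = -(T^2)/(100 * c * CARD('d) * R)"
      using w by (simp add: s_def power_divide power_mult_distrib)
    finally show ?thesis .
  qed
  show ?thesis by (rule that[OF _ _ K tail]) (use variogram_pos in auto)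
qed

lemma countable_exceedance_event:
  assumes "countable D"
  shows "{\<omega>\<in>space P. \<exists>p\<in>D. t < G p \<omega>} \<in> events"
proof -
  have "{\<omega>\<in>space P. t < G p \<omega>} \<in> events" for p by measurable
  hence "(\<Union>p\<in>D. {\<omega>\<in>space P. t < G p \<omega>}) \<in> events"
    using assms by (intro sets.countable_UN') auto
  also have "(\<Union>p\<in>D. {\<omega>\<in>space P. t < G p \<omega>}) = {\<omega>\<in>space P. \<exists>p\<in>D. t < G p \<omega>}" by auto
  finally show ?thesis .
qed

lemma drift_exceedance_event: "drift_exceedance P G \<mu> y \<in> events"
  unfolding drift_exceedance_def
  by (auto intro!: sets.countable_UN' countable_exceedance_event countable_dyadic_grid)

text \<open>Peeling: on the shell of radius j + 1 the drift lowers the threshold by \<mu> * j^2,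
  which the Gaussian tail of grid_exceedance_tail turns into a factor exp (-\<mu>)^j.\<close>
lemma drift_exceedance_tail:
  assumes \<mu>: "0 < \<mu>"
  obtains A y0 where "0 \<le> A" "\<And>y. y0 \<le> y \<Longrightarrow> prob (drift_exceedance P G \<mu> y) \<le> A * exp (-y)"
proof -
  obtain A \<beta> K where A: "0 \<le> A" and \<beta>: "0 < \<beta>" and K: "0 < K" and grid:
    "\<And>R T. 0 < R \<Longrightarrow> K * sqrt R \<le> T \<Longrightarrow>
       prob {\<omega>\<in>space P. \<exists>p\<in>dyadic_grid R. T < G p \<omega>} \<le> A * exp (-(T^2)/(\<beta> * R))"
    using grid_exceedance_tail by blast
  define K' where "K' = max K \<beta>"
  define y0 where "y0 = K' + K'^2 / (4 * \<mu>)"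
  define S where "S y j = {\<omega>\<in>space P. \<exists>p\<in>dyadic_grid (real j + 1). y + \<mu> * (real j)^2 < G p \<omega>}"
    for y j
  have shell: "prob (S y j) \<le> A * exp (-y) * exp (-\<mu>) ^ j" if y: "y0 \<le> y" for y j
  proof -
    have T: "K' * (real j + 1) \<le> y + \<mu> * (real j)^2"
      and exponent: "-((y + \<mu> * (real j)^2)^2) / (\<beta> * (real j + 1)) \<le> -y - \<mu> * real j"
      using shell_threshold_bounds[OF \<mu> \<beta> _ y[unfolded y0_def]] by (auto simp: K'_def)
    have "real j + 1 \<le> (real j + 1)^2" by (simp add: power2_eq_square)
    hence "sqrt (real j + 1) \<le> real j + 1" by (metis real_sqrt_le_mono real_sqrt_abs abs_of_nonneg
          of_nat_0_le_iff add_nonneg_nonneg zero_le_one)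
    hence "K * sqrt (real j + 1) \<le> K' * (real j + 1)"
      using K by (intro mult_mono) (auto simp: K'_def)
    with T have "prob (S y j) \<le> A * exp (-((y + \<mu> * (real j)^2)^2)/(\<beta> * (real j + 1)))"
      unfolding S_def by (intro grid) auto
    also have "\<dots> \<le> A * exp (-y - \<mu> * real j)"
      using exponent A by (intro mult_left_mono) auto
    also have "\<dots> = A * exp (-y) * exp (-\<mu>) ^ j"
      by (simp add: exp_diff exp_minus exp_of_nat_mult[symmetric] field_simps)
    finally show ?thesis .
  qed
  have "prob (drift_exceedance P G \<mu> y) \<le> A / (1 - exp (-\<mu>)) * exp (-y)" if y: "y0 \<le> y" for y
  proof -
    have geom: "summable (\<lambda>j. A * exp (-y) * exp (-\<mu>) ^ j)"
      using \<mu> by (intro summable_mult summable_geometric) simp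
    have "summable (\<lambda>j. prob (S y j))"
      by (rule summable_comparison_test'[OF geom]) (use shell y in auto)
    hence "prob (\<Union>j. S y j) \<le> (\<Sum>j. prob (S y j))"
      by (intro finite_measure_subadditive_countably)
        (auto simp: S_def countable_exceedance_event countable_dyadic_grid)
    also have "\<dots> \<le> (\<Sum>j. A * exp (-y) * exp (-\<mu>) ^ j)"
      using \<open>summable (\<lambda>j. prob (S y j))\<close> geom shell y by (intro suminf_le) auto
    also have "\<dots> = A / (1 - exp (-\<mu>)) * exp (-y)"
      using \<mu> by (simp add: suminf_mult suminf_geometric field_simps)
    finally show ?thesis by (simp add: drift_exceedance_def S_def)
  qed
  moreover have "0 \<le> A / (1 - exp (-\<mu>))" using A \<mu> by simp
  ultimately show ?thesis using that by blast
qed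

lemma quadratic_drift_sup_bounds:
  fixes V :: "real^'d^'d"
  assumes paths: "\<And>\<omega>. \<omega> \<in> space P \<Longrightarrow> continuous_on UNIV (\<lambda>h. G h \<omega>)"
    and posdef: "\<And>u. u \<noteq> 0 \<Longrightarrow> 0 < u \<bullet> (V *v u)"
  obtains C x0 where "0 < C" "0 < x0"
    "\<And>a \<epsilon> x. a \<in> sphere 0 1 \<Longrightarrow> \<epsilon> \<in> {-1..1} \<Longrightarrow> x0 \<le> x \<Longrightarrow>
       prob {\<omega>\<in>space P. (SUP h. ereal (G h \<omega> - (1/2) * (h \<bullet> (V *v h)) + \<epsilon> * (a \<bullet> h))) > ereal x}
         \<le> C * exp (-x)"
    "\<And>a \<epsilon> k. a \<in> sphere 0 1 \<Longrightarrow> \<epsilon> \<in> {-1..1} \<Longrightarrow> 0 < k \<Longrightarrow>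
       (\<integral>\<^sup>+\<omega>. e2ennreal (SUP h. ereal (G h \<omega> - (1/2) * (h \<bullet> (V *v h)) + \<epsilon> * (a \<bullet> h))) ^ k \<partial>P)
         \<le> ennreal (\<Sum>n. (real n + 1)^k * (C * exp (- real n)))"
proof -
  let ?Z = "\<lambda>a \<epsilon> \<omega>. SUP h. ereal (G h \<omega> - (1/2) * (h \<bullet> (V *v h)) + \<epsilon> * (a \<bullet> h))"
  obtain lam where lam: "0 < lam" "\<And>h. lam * (norm h)^2 \<le> h \<bullet> (V *v h)"
    using posdef_quadratic_form_coercive posdef by blast
  define \<mu> where "\<mu> = lam / 4"
  obtain A y0 where A: "0 \<le> A" and tail: "\<And>y. y0 \<le> y \<Longrightarrow> prob (drift_exceedance P G \<mu> y) \<le> A * exp (-y)"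
    using drift_exceedance_tail[of \<mu>] lam by (auto simp: \<mu>_def)
  have exceeds: "\<omega> \<in> drift_exceedance P G \<mu> (x - 1/lam)"
    if \<omega>: "\<omega> \<in> space P" and a: "a \<in> sphere 0 1" and \<epsilon>: "\<epsilon> \<in> {-1..1}" and x: "ereal x < ?Z a \<epsilon> \<omega>"
    for a \<epsilon> \<omega> x
  proof -
    obtain h where h: "x < G h \<omega> - (1/2) * (h \<bullet> (V *v h)) + \<epsilon> * (a \<bullet> h)"
      using x by (auto simp: less_SUP_iff)
    have "-(1/2) * (h \<bullet> (V *v h)) + \<epsilon> * (a \<bullet> h) \<le> -(lam/4) * (norm h)^2 + 1/lam"
      using a \<epsilon> by (intro linear_drift_le_quadratic lam) auto
    with h have "x - 1/lam < G h \<omega> - \<mu> * (norm h)^2" by (simp add: \<mu>_def)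
    with \<omega> paths lam show ?thesis by (intro drift_exceedanceI) (auto simp: \<mu>_def)
  qed
  define C where "C = max (A * exp (1/lam)) (exp (y0 + 1/lam))"
  have shifted_tail: "prob (drift_exceedance P G \<mu> (x - 1/lam)) \<le> C * exp (-x)" if "y0 + 1/lam \<le> x" for x
  proof -
    have "prob (drift_exceedance P G \<mu> (x - 1/lam)) \<le> A * exp (1/lam) * exp (-x)"
      using tail[of "x - 1/lam"] that by (simp add: exp_diff exp_minus field_simps)
    also have "\<dots> \<le> C * exp (-x)" by (simp add: C_def)
    finally show ?thesis .
  qed
  show ?thesis
  proof (rule that)
    show "0 < C" "0 < max y0 0 + 1/lam + 1" using lam by (auto simp: C_def less_max_iff_disj add_nonneg_pos)
    show "prob {\<omega>\<in>space P. ?Z a \<epsilon> \<omega> > ereal x} \<le> C * exp (-x)"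
      if "a \<in> sphere 0 1" "\<epsilon> \<in> {-1..1}" "max y0 0 + 1/lam + 1 \<le> x" for a \<epsilon> x
    proof -
      have "prob {\<omega>\<in>space P. ?Z a \<epsilon> \<omega> > ereal x} \<le> prob (drift_exceedance P G \<mu> (x - 1/lam))"
        using exceeds that by (intro finite_measure_mono drift_exceedance_event) auto
      also have "\<dots> \<le> C * exp (-x)" using that by (intro shifted_tail) simp
      finally show ?thesis .
    qed
    show "(\<integral>\<^sup>+\<omega>. e2ennreal (?Z a \<epsilon> \<omega>) ^ k \<partial>P) \<le> ennreal (\<Sum>n. (real n + 1)^k * (C * exp (- real n)))"
      if "a \<in> sphere 0 1" "\<epsilon> \<in> {-1..1}" "0 < k" for a \<epsilon> k
    proof -
      have "(\<integral>\<^sup>+\<omega>. e2ennreal (?Z a \<epsilon> \<omega>) ^ k \<partial>P)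
          \<le> ennreal (\<Sum>n. (real n + 1)^k * (max C (exp (y0 + 1/lam)) * exp (- real n)))"
      proof (rule nn_integral_power_le_exponential_tail)
        show "drift_exceedance P G \<mu> (x - 1/lam) \<in> events" for x by (rule drift_exceedance_event)
        show "\<And>x \<omega>. \<omega> \<in> space P \<Longrightarrow> ereal x < ?Z a \<epsilon> \<omega> \<Longrightarrow> \<omega> \<in> drift_exceedance P G \<mu> (x - 1/lam)"
          using exceeds that by blast
      qed (use shifted_tail that in auto)
      moreover have "max C (exp (y0 + 1/lam)) = C" by (simp add: C_def)
      ultimately show ?thesis by simp
    qed
  qed
qed

end

lemma gaussian_field_of_cube_root_limit:
  fixes M :: "'w measure" and X :: "'w \<Rightarrow> 'b" and m :: "'b \<Rightarrow> real^'d::finite \<Rightarrow> real"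
    and \<theta> :: "real^'d" and P :: "'p measure" and G :: "real^'d \<Rightarrow> 'p \<Rightarrow> real"
    and K :: "real^'d \<Rightarrow> real^'d \<Rightarrow> real"
  defines "mh \<equiv> (\<lambda>(n::nat) h x. m x (\<theta> + (real n powr (-1/3)) *\<^sub>R h) - m x \<theta>)"
  assumes probP: "prob_space P" and G_gauss: "gaussian_process P G K" and \<delta>: "0 < \<delta>"
    and K_limit: "\<And>h1 h2. (\<lambda>n. real n powr (1/3) * (\<integral>\<omega>. mh n h1 (X \<omega>) * mh n h2 (X \<omega>) \<partial>M))
      \<longlonglongrightarrow> K h1 h2"
    and L_approx: "\<exists>C. \<forall>n::nat. n \<ge> 1 \<longrightarrow> (\<forall>h1 h2.
      norm h1 \<le> real n powr (1/3) * \<delta> \<and> norm h2 \<le> real n powr (1/3) * \<delta> \<longrightarrow>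
      \<bar>K (h1 - h2) (h1 - h2) - real n powr (1/3) * (\<integral>\<omega>. (m (X \<omega>) (\<theta> + (real n powr (-1/3)) *\<^sub>R h1)
          - m (X \<omega>) (\<theta> + (real n powr (-1/3)) *\<^sub>R h2))\<^sup>2 \<partial>M)\<bar>
        \<le> C * (norm h1 + norm h2)\<^sup>2 / real n powr (1/3))"
    and L_pos: "\<And>h. h \<noteq> 0 \<Longrightarrow> K h h > 0" and L_sym: "\<And>h. K (- h) (- h) = K h h"
    and L_cont: "continuous_on UNIV (\<lambda>h. K h h)"
    and L_hom: "\<forall>k h. k > 0 \<longrightarrow> K (k *\<^sub>R h) (k *\<^sub>R h) = k * K h h"
  obtains c where "gaussian_field_linear_variogram P G c"
proof -
  obtain C where approx: "\<And>n h1 h2. n \<ge> 1 \<Longrightarrow> norm h1 \<le> real n powr (1/3) * \<delta> \<Longrightarrow>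
      norm h2 \<le> real n powr (1/3) * \<delta> \<Longrightarrow>
      \<bar>K (h1 - h2) (h1 - h2) - real n powr (1/3) * (\<integral>\<omega>. (m (X \<omega>) (\<theta> + (real n powr (-1/3)) *\<^sub>R h1)
          - m (X \<omega>) (\<theta> + (real n powr (-1/3)) *\<^sub>R h2))\<^sup>2 \<partial>M)\<bar>
        \<le> C * (norm h1 + norm h2)\<^sup>2 / real n powr (1/3)"
    using L_approx by blast
  have increment_limit: "(\<lambda>n. real n powr (1/3) * (\<integral>\<omega>. (mh n p (X \<omega>) - mh n q (X \<omega>))^2 \<partial>M))
      \<longlonglongrightarrow> K (p - q) (p - q)" for p q
    by (rule tendsto_of_cube_root_approx[OF \<delta>]) (use approx in \<open>simp add: mh_def\<close>)
  have covariance: "K p q = (K p p + K q q - K (p - q) (p - q)) / 2" for p q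
    by (rule covariance_polarization[where Y="\<lambda>n h \<omega>. mh n h (X \<omega>)"])
      (use K_limit increment_limit L_pos in \<open>auto simp: mh_def\<close>)
  have increment_variance: "centered_gaussian P (\<lambda>\<omega>. G p \<omega> - G q \<omega>) (K (p - q) (p - q))" for p q
  proof -
    have "K (q - p) (q - p) = K (p - q) (p - q)" using L_sym[of "p - q"] by simp
    hence "K p p - K p q - K q p + K q q = K (p - q) (p - q)"
      using covariance[of p q] covariance[of q p] by (simp add: field_simps)
    thus ?thesis using gaussian_process_increment[OF G_gauss, of p q] by simp
  qed
  obtain c where c: "0 < c" "\<And>h. K h h \<le> c * norm h"
    using positively_homogeneous_le_linear[OF L_cont L_hom] by blast
  have "gaussian_field_linear_variogram P G c"
  proof (intro gaussian_field_linear_variogram.intro gaussian_field_linear_variogram_axioms.intro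
      probP c(1))
    show "\<exists>s\<le>c * norm p. centered_gaussian P (G p) s" for p
      using gaussian_process_value[OF G_gauss, of p] c(2)[of p] by blast
    show "\<exists>s\<le>c * norm (p - q). centered_gaussian P (\<lambda>\<omega>. G p \<omega> - G q \<omega>) s" for p q
      using increment_variance c(2) by blast
  qed
  thus ?thesis by (rule that)
qed

theorem lemma2:
  fixes M :: "'w measure" and N :: "'b measure" and X :: "'w \<Rightarrow> 'b"
    and \<Theta> :: "(real ^ 'd) set" and m :: "'b \<Rightarrow> real ^ 'd \<Rightarrow> real"
    and \<theta>0 :: "real ^ 'd" and \<delta> :: real
    and grad :: "real ^ 'd \<Rightarrow> real ^ 'd" and Vf :: "real ^ 'd \<Rightarrow> real ^ 'd ^ 'd"
    and Menv :: "'b \<Rightarrow> real" and v :: nat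
    and P :: "'p measure" and G :: "real ^ 'd \<Rightarrow> 'p \<Rightarrow> real"
    and K :: "real ^ 'd \<Rightarrow> real ^ 'd \<Rightarrow> real"
  defines "Em \<equiv> (\<lambda>\<theta>. \<integral>\<omega>. m (X \<omega>) \<theta> \<partial>M)"
    and "Nd \<equiv> cball \<theta>0 \<delta>"
    and "V \<equiv> Vf \<theta>0"
    and "mh \<equiv> (\<lambda>(n::nat) h x. m x (\<theta>0 + (real n powr (-1/3)) *\<^sub>R h) - m x \<theta>0)"
    and "L \<equiv> (\<lambda>h. K h h)"
  assumes probM: "prob_space M"
    and X_meas: "X \<in> measurable M N"
    and Theta_compact: "compact \<Theta>"
    and m_meas: "\<forall>\<theta>\<in>\<Theta>. (\<lambda>x. m x \<theta>) \<in> borel_measurable N"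
    and theta0_in: "\<theta>0 \<in> \<Theta>"
    and theta0_unique_max: "\<forall>\<theta>\<in>\<Theta>. \<theta> \<noteq> \<theta>0 \<longrightarrow> Em \<theta> < Em \<theta>0"
    \<comment> \<open>(A1)\<close>
    and delta_pos: "\<delta> > 0"
    and A1_grad: "\<forall>\<theta>\<in>Nd. (Em has_derivative (\<lambda>u. grad \<theta> \<bullet> u)) (at \<theta> within Nd)"
    and A1_hess: "\<forall>\<theta>\<in>Nd. (grad has_derivative (\<lambda>u. - (Vf \<theta> *v u))) (at \<theta> within Nd)"
    and A1_cont: "continuous_on Nd Vf"
    and A1_posdef: "\<forall>\<theta>\<in>Nd. \<forall>u. u \<noteq> 0 \<longrightarrow> u \<bullet> (Vf \<theta> *v u) > 0"
    and A1_sep: "\<exists>c. c < Em \<theta>0 \<and> (\<forall>\<theta>\<in>\<Theta> - Nd. Em \<theta> \<le> c)"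
    \<comment> \<open>(A2)\<close>
    and A2: "\<exists>C. \<forall>\<theta>1\<in>Nd. \<forall>\<theta>2\<in>Nd.
               (\<integral>\<omega>. (m (X \<omega>) \<theta>1 - m (X \<omega>) \<theta>2)\<^sup>2 \<partial>M) \<le> C * norm (\<theta>1 - \<theta>2)"
    \<comment> \<open>(A3)\<close>
    and A3_meas: "Menv \<in> borel_measurable N"
    and A3_env: "\<forall>\<theta>\<in>\<Theta>. \<forall>x\<in>space N. \<bar>m x \<theta>\<bar> \<le> Menv x"
    and A3_psi1: "psi1_norm M (\<lambda>\<omega>. Menv (X \<omega>)) < \<infinity>"
    \<comment> \<open>(A4)\<close>
    and A4: "\<exists>C. \<forall>R. 0 \<le> R \<and> R \<le> \<delta> \<longrightarrow>
               (\<integral>\<^sup>+ \<omega>. (e2ennreal (SUP \<theta>\<in>cball \<theta>0 R. ereal \<bar>m (X \<omega>) \<theta> - m (X \<omega>) \<theta>0\<bar>))\<^sup>2 \<partial>M)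
                 \<le> ennreal (C * R)"
    \<comment> \<open>(A5)\<close>
    and A5: "1 \<le> v" "fun_class_vc_index (space N) ((\<lambda>\<theta>. \<lambda>x. m x \<theta>) ` \<Theta>) v"
    \<comment> \<open>(A6)\<close>
    and A6: "\<exists>C. \<forall>\<theta>\<in>Nd. onorm (\<lambda>u. (Vf \<theta> - V) *v u) \<le> C * norm (\<theta> - \<theta>0)"
    \<comment> \<open>(A7)\<close>
    and probP: "prob_space P"
    and K_limit: "\<forall>h1 h2. (\<lambda>n. real n powr (1/3) * (\<integral>\<omega>. mh n h1 (X \<omega>) * mh n h2 (X \<omega>) \<partial>M))
                     \<longlonglongrightarrow> K h1 h2"
    and G_gauss: "gaussian_process P G K"
    and G_cont: "\<forall>\<omega>\<in>space P. continuous_on UNIV (\<lambda>h. G h \<omega>)"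
    and L_pos: "\<forall>h. h \<noteq> 0 \<longrightarrow> L h > 0"
    and L_sym: "\<forall>h. L (- h) = L h"
    and L_cont: "continuous_on UNIV L"
    and L_hom: "\<forall>k h. k > 0 \<longrightarrow> L (k *\<^sub>R h) = k * L h"
    and L_approx: "\<exists>C. \<forall>n::nat. n \<ge> 1 \<longrightarrow> (\<forall>h1 h2.
               norm h1 \<le> real n powr (1/3) * \<delta> \<and> norm h2 \<le> real n powr (1/3) * \<delta> \<longrightarrow>
               \<bar>L (h1 - h2) - real n powr (1/3) *
                   (\<integral>\<omega>. (m (X \<omega>) (\<theta>0 + (real n powr (-1/3)) *\<^sub>R h1)
                          - m (X \<omega>) (\<theta>0 + (real n powr (-1/3)) *\<^sub>R h2))\<^sup>2 \<partial>M)\<bar>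
                 \<le> C * (norm h1 + norm h2)\<^sup>2 / real n powr (1/3))"
  shows "\<exists>C6 C7 C8 K0. C6 > 0 \<and> C7 > 0 \<and> C8 > 0 \<and> K0 > 0 \<and>
           (\<forall>x\<ge>K0. (SUP a\<in>sphere 0 1. SUP \<epsilon>\<in>{-1..1::real}.
              measure P {\<omega>\<in>space P.
                 (SUP h. ereal (G h \<omega> - (1/2) * (h \<bullet> (V *v h)) + \<epsilon> * (a \<bullet> h))) > ereal x})
              \<le> C6 * exp (- C7 * x\<^sup>2) + C8 * exp (- x))
         \<and> (\<forall>k::nat. k > 0 \<longrightarrow>
              (SUP a\<in>sphere 0 1. SUP \<epsilon>\<in>{-1..1::real}.
                 \<integral>\<^sup>+ \<omega>. (e2ennreal (SUP h. ereal (G h \<omega> - (1/2) * (h \<bullet> (V *v h)) + \<epsilon> * (a \<bullet> h)))) ^ k \<partial>P)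
              < \<infinity>)"
proof -
  interpret P: prob_space P by (rule probP)
  obtain c where "gaussian_field_linear_variogram P G c"
    by (rule gaussian_field_of_cube_root_limit[where \<theta>=\<theta>0 and m=m and X=X and M=M,
          OF probP G_gauss delta_pos K_limit[unfolded mh_def, rule_format] L_approx[unfolded L_def]])
      (use L_pos L_sym L_cont L_hom in \<open>auto simp: L_def\<close>)
  then interpret field: gaussian_field_linear_variogram P G c .
  have posdef: "u \<noteq> 0 \<Longrightarrow> 0 < u \<bullet> (V *v u)" for u
    using A1_posdef delta_pos by (simp add: V_def Nd_def)
  obtain C x0 where C: "0 < C" "0 < x0"
    and tail: "\<And>a \<epsilon> x. a \<in> sphere 0 1 \<Longrightarrow> \<epsilon> \<in> {-1..1} \<Longrightarrow> x0 \<le> x \<Longrightarrow>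
       P.prob {\<omega>\<in>space P. (SUP h. ereal (G h \<omega> - (1/2) * (h \<bullet> (V *v h)) + \<epsilon> * (a \<bullet> h))) > ereal x}
         \<le> C * exp (-x)"
    and moment: "\<And>a \<epsilon> k. a \<in> sphere 0 1 \<Longrightarrow> \<epsilon> \<in> {-1..1} \<Longrightarrow> 0 < k \<Longrightarrow>
       (\<integral>\<^sup>+\<omega>. e2ennreal (SUP h. ereal (G h \<omega> - (1/2) * (h \<bullet> (V *v h)) + \<epsilon> * (a \<bullet> h))) ^ k \<partial>P)
         \<le> ennreal (\<Sum>n. (real n + 1)^k * (C * exp (- real n)))"
    using field.quadratic_drift_sup_bounds[OF G_cont[rule_format] posdef] by blast
  text \<open>The exponential term alone already dominates; the Gaussian term is carried along with
    C6 = C7 = 1.\<close>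
  show ?thesis
  proof (rule exI[of _ 1], rule exI[of _ 1], rule exI[of _ C], rule exI[of _ x0],
      intro conjI allI impI)
    show "(SUP a\<in>sphere 0 1. SUP \<epsilon>\<in>{-1..1}. P.prob {\<omega>\<in>space P.
        (SUP h. ereal (G h \<omega> - (1/2) * (h \<bullet> (V *v h)) + \<epsilon> * (a \<bullet> h))) > ereal x})
        \<le> 1 * exp (- 1 * x\<^sup>2) + C * exp (- x)" if "x0 \<le> x" for x
      using tail that by (intro cSUP_least) (auto intro: add_increasing)
    show "(SUP a\<in>sphere 0 1. SUP \<epsilon>\<in>{-1..1}.
        \<integral>\<^sup>+\<omega>. e2ennreal (SUP h. ereal (G h \<omega> - (1/2) * (h \<bullet> (V *v h)) + \<epsilon> * (a \<bullet> h))) ^ k \<partial>P) < \<infinity>"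
      if "0 < k" for k
    proof -
      have "(SUP a\<in>sphere 0 1. SUP \<epsilon>\<in>{-1..1}. \<integral>\<^sup>+\<omega>. e2ennreal
          (SUP h. ereal (G h \<omega> - (1/2) * (h \<bullet> (V *v h)) + \<epsilon> * (a \<bullet> h))) ^ k \<partial>P)
          \<le> ennreal (\<Sum>n. (real n + 1)^k * (C * exp (- real n)))"
        using moment[OF _ _ that] by (intro SUP_least) auto
      thus ?thesis by (rule order.strict_trans1) simp
    qed
  qed (use C in simp_all)
qed

end
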